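(* Let $R$ be a commutative ring, $M$ an $R$-module, $y_1,\ldots,y_r\in R$, and let $i>0$ be an integer. Assume that for all $A\subseteq\{1,\ldots,r\}$ and all $s$ with $\max A<s\le r$ one has $y_sH_i(y_A;M)=0$. Then for all $A\subseteq\{1,\ldots,r\}$ the canonical map $$\partial\colon H_{i+1}(y_A;M)\to\bigoplus_{j\in A}H_i(y_{A_j};M),\quad \partial([z])=(\partial_j([z]))_{j\in A},$$ is injective.
   Context: For $A\subseteq\{1,\ldots,r\}$, $y_A=\{y_j:j\in A\}$ and for $j\in A$, $A_j=A\setminus\{j\}$; $H_i(y_A;M)$ is the Koszul homology of $M$ with respect to $y_A$, the Koszul complex having exterior basis $e_j$, $j\in A$. The map $\partial_j\colon H_{i+1}(y_A;M)\to H_i(y_{A_j};M)$ is defined as follows: a cycle $z\in Z_{i+1}(y_A;M)$ can be uniquely written $z=z_0+z_1\wedge e_j$ with $z_0\in K_{i+1}(y_{A_j};M)$ and $z_1\in Z_i(y_{A_j};M)$, and $\partial_j([z])=[z_1]$ (it is the connecting map in the long exact sequence $\cdots\to H_{i+1}(y_{A_j};M)\to H_{i+1}(y_A;M)\to H_i(y_{A_j};M)\xrightarrow{y_j}\cdots$). *)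

theory Defs
  imports Complex_Main
begin

text \<open>A chain of degree i is a family of coefficients
  c S (the coefficient of e_S = e_{s_1} wedge ... wedge e_{s_k}, s_1 < ... < s_k),
  supported on subsets S of A with card S = i.\<close>

definition kchain :: "nat set \<Rightarrow> nat \<Rightarrow> (nat set \<Rightarrow> 'b::ab_group_add) set" where
  "kchain A i = {c. \<forall>S. c S \<noteq> 0 \<longrightarrow> S \<subseteq> A \<and> card S = i}"

text \<open>Koszul differential: d(m e_S) = sum over j in S of (-1)^(number of k in S with k < j) y_j m e_(S - {j}).\<close>
definition kdiff :: "('a::comm_ring_1 \<Rightarrow> 'b::ab_group_add \<Rightarrow> 'b) \<Rightarrow> (nat \<Rightarrow> 'a) \<Rightarrow> nat set
    \<Rightarrow> (nat set \<Rightarrow> 'b) \<Rightarrow> (nat set \<Rightarrow> 'b)" where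
  "kdiff scale y A c = (\<lambda>T. \<Sum>j\<in>A - T. scale ((-1) ^ card {k\<in>T. k < j} * y j) (c (insert j T)))"

definition kcycles :: "('a::comm_ring_1 \<Rightarrow> 'b::ab_group_add \<Rightarrow> 'b) \<Rightarrow> (nat \<Rightarrow> 'a) \<Rightarrow> nat set
    \<Rightarrow> nat \<Rightarrow> (nat set \<Rightarrow> 'b) set" where
  "kcycles scale y A i = {c \<in> kchain A i. kdiff scale y A c = (\<lambda>_. 0)}"

definition kbounds :: "('a::comm_ring_1 \<Rightarrow> 'b::ab_group_add \<Rightarrow> 'b) \<Rightarrow> (nat \<Rightarrow> 'a) \<Rightarrow> nat set
    \<Rightarrow> nat \<Rightarrow> (nat set \<Rightarrow> 'b) set" where
  "kbounds scale y A i = kdiff scale y A ` kchain A (Suc i)"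

definition kclass :: "('a::comm_ring_1 \<Rightarrow> 'b::ab_group_add \<Rightarrow> 'b) \<Rightarrow> (nat \<Rightarrow> 'a) \<Rightarrow> nat set
    \<Rightarrow> nat \<Rightarrow> (nat set \<Rightarrow> 'b) \<Rightarrow> (nat set \<Rightarrow> 'b) set" where
  "kclass scale y A i z = {(\<lambda>S. z S + b S) | b. b \<in> kbounds scale y A i}"

definition khom :: "('a::comm_ring_1 \<Rightarrow> 'b::ab_group_add \<Rightarrow> 'b) \<Rightarrow> (nat \<Rightarrow> 'a) \<Rightarrow> nat set
    \<Rightarrow> nat \<Rightarrow> (nat set \<Rightarrow> 'b) set set" where
  "khom scale y A i = kclass scale y A i ` kcycles scale y A i"

text \<open>Writing z = z_0 + z_1 wedge e_j with z_1 supported on subsets of A - {j}: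
  since e_T wedge e_j = (-1)^(number of k in T with k > j) e_(insert j T),
  the coefficient of z_1 at T is (-1)^(...) times z (insert j T).\<close>
definition kpart :: "('a::comm_ring_1 \<Rightarrow> 'b::ab_group_add \<Rightarrow> 'b) \<Rightarrow> nat \<Rightarrow> nat set
    \<Rightarrow> (nat set \<Rightarrow> 'b) \<Rightarrow> (nat set \<Rightarrow> 'b)" where
  "kpart scale j A z = (\<lambda>T. if T \<subseteq> A - {j}
       then scale ((-1) ^ card {k\<in>T. j < k}) (z (insert j T)) else 0)"

definition kconn :: "('a::comm_ring_1 \<Rightarrow> 'b::ab_group_add \<Rightarrow> 'b) \<Rightarrow> (nat \<Rightarrow> 'a) \<Rightarrow> nat set
    \<Rightarrow> nat \<Rightarrow> nat \<Rightarrow> (nat set \<Rightarrow> 'b) set \<Rightarrow> (nat set \<Rightarrow> 'b) set" where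
  "kconn scale y A i j h = kclass scale y (A - {j}) i
     (kpart scale j A (SOME z. z \<in> kcycles scale y A (Suc i) \<and> kclass scale y A (Suc i) z = h))"

definition kbd :: "('a::comm_ring_1 \<Rightarrow> 'b::ab_group_add \<Rightarrow> 'b) \<Rightarrow> (nat \<Rightarrow> 'a) \<Rightarrow> nat set
    \<Rightarrow> nat \<Rightarrow> (nat set \<Rightarrow> 'b) set \<Rightarrow> (nat \<Rightarrow> (nat set \<Rightarrow> 'b) set)" where
  "kbd scale y A i h = (\<lambda>j. if j \<in> A then kconn scale y A i j h else undefined)"

end

theory Submission
  imports Defs
begin

text \<open>Induction on \<open>A\<close>, removing \<open>j = max A\<close>. Let \<open>z\<close> be a cycle on \<open>A\<close> all of whose
  components \<open>\<partial>\<^sub>k z\<close> are boundaries. Writing the \<open>e\<^sub>j\<close>-component of \<open>z\<close> as \<open>d w\<close> and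
  subtracting \<open>d (w \<and> e\<^sub>j)\<close> leaves a homologous cycle \<open>z'\<close> on \<open>A - {j}\<close>. Each \<open>\<partial>\<^sub>k z'\<close>
  is a boundary on \<open>A - {k}\<close> that avoids \<open>e\<^sub>j\<close>; because \<open>y\<^sub>j\<close> kills \<open>H\<^sub>i\<close> of the smaller
  indices \<open>A - {j, k}\<close>, it is already a boundary on \<open>A - {j, k}\<close>. So \<open>z'\<close> satisfies the
  hypothesis on \<open>A - {j}\<close>, and by induction \<open>z'\<close>, hence \<open>z\<close>, is a boundary.\<close>

lemma card_filter_insert:
  assumes "finite T" "k \<notin> T"
  shows "card {m\<in>insert k T. P m} = card {m\<in>T. P m} + (if P k then 1 else 0)"
proof -
  have "{m\<in>insert k T. P m} = (if P k then insert k {m\<in>T. P m} else {m\<in>T. P m})" by auto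
  thus ?thesis using assms by auto
qed

text \<open>The chain \<open>w \<and> e\<^sub>j\<close>; no sign is needed as long as \<open>j\<close> exceeds all indices in the
  support of \<open>w\<close>, which is the only case used.\<close>
definition kwedge :: "nat \<Rightarrow> (nat set \<Rightarrow> 'b::zero) \<Rightarrow> nat set \<Rightarrow> 'b" where
  "kwedge j w = (\<lambda>S. if j \<in> S then w (S - {j}) else 0)"

definition khom_annihilated_above ::
    "('a::comm_ring_1 \<Rightarrow> 'b::ab_group_add \<Rightarrow> 'b) \<Rightarrow> (nat \<Rightarrow> 'a) \<Rightarrow> nat set \<Rightarrow> nat \<Rightarrow> bool" where
  "khom_annihilated_above scale y A n \<longleftrightarrow>
    (\<forall>B s. B \<subseteq> A \<longrightarrow> s \<in> A \<longrightarrow> (\<forall>b\<in>B. b < s) \<longrightarrow>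
      (\<forall>v\<in>kcycles scale y B n. (\<lambda>S. scale (y s) (v S)) \<in> kbounds scale y B n))"

lemma khom_annihilated_above_subset:
  "khom_annihilated_above scale y A n \<Longrightarrow> A' \<subseteq> A \<Longrightarrow> khom_annihilated_above scale y A' n"
  unfolding khom_annihilated_above_def by (meson order_trans subsetD)

context module
begin

lemma kchain_zero: "(\<lambda>_. 0) \<in> kchain A n"
  by (simp add: kchain_def)

lemma kchain_add: "f \<in> kchain A n \<Longrightarrow> g \<in> kchain A n \<Longrightarrow> (\<lambda>S. f S + g S) \<in> kchain A n"
  unfolding kchain_def by (smt (verit) add.right_neutral mem_Collect_eq)

lemma kchain_diff: "f \<in> kchain A n \<Longrightarrow> g \<in> kchain A n \<Longrightarrow> (\<lambda>S. f S - g S) \<in> kchain A n"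
  unfolding kchain_def by (smt (verit) diff_self mem_Collect_eq)

lemma kchain_scale: "f \<in> kchain A n \<Longrightarrow> (\<lambda>S. a *s f S) \<in> kchain A n"
  unfolding kchain_def by (smt (verit) mem_Collect_eq scale_zero_right)

lemma kchain_mono: "f \<in> kchain B n \<Longrightarrow> B \<subseteq> A \<Longrightarrow> f \<in> kchain A n"
  unfolding kchain_def by blast

lemma kchain_restrict:
  assumes "c \<in> kchain A n"
  shows "(\<lambda>S. if S \<subseteq> B then c S else 0) \<in> kchain B n"
  unfolding kchain_def
proof (intro CollectI allI impI)
  fix S assume "(if S \<subseteq> B then c S else 0) \<noteq> 0"
  hence "S \<subseteq> B" "c S \<noteq> 0" by (auto split: if_splits)
  thus "S \<subseteq> B \<and> card S = n" using assms unfolding kchain_def by blast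
qed

lemma kchain_empty_Suc: "c \<in> kchain {} (Suc n) \<Longrightarrow> c = (\<lambda>_. 0)"
  unfolding kchain_def by fastforce

lemma kchain_sign:
  assumes "c \<in> kchain A n"
  shows "((-1) ^ card S * a) *s c S = ((-1) ^ n * a) *s c S"
  using assms by (cases "c S = 0") (auto simp: kchain_def)

lemma kchain_sign_insert:
  assumes "c \<in> kchain A (Suc n)" "finite T" "j \<notin> T"
  shows "((-1) ^ card T * a) *s c (insert j T) = ((-1) ^ n * a) *s c (insert j T)"
  using kchain_sign[OF assms(1), of "insert j T" "- a"] assms(2,3) by simp

lemma kdiff_add: "kdiff scale y A (\<lambda>S. f S + g S) T = kdiff scale y A f T + kdiff scale y A g T"
  by (simp add: kdiff_def scale_right_distrib sum.distrib)

lemma kdiff_diff: "kdiff scale y A (\<lambda>S. f S - g S) T = kdiff scale y A f T - kdiff scale y A g T"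
  by (simp add: kdiff_def scale_right_diff_distrib sum_subtractf)

lemma kdiff_scale: "kdiff scale y A (\<lambda>S. a *s f S) T = a *s kdiff scale y A f T"
  by (simp add: kdiff_def scale_sum_right mult.commute)

lemma kdiff_cong:
  "(\<And>S. S \<subseteq> A \<Longrightarrow> f S = g S) \<Longrightarrow> T \<subseteq> A \<Longrightarrow> kdiff scale y A f T = kdiff scale y A g T"
  unfolding kdiff_def by (intro sum.cong) auto

lemma kdiff_eq_0_outside:
  "(\<And>S. \<not> S \<subseteq> A \<Longrightarrow> c S = 0) \<Longrightarrow> \<not> T \<subseteq> A \<Longrightarrow> kdiff scale y A c T = 0"
  unfolding kdiff_def by (intro sum.neutral) auto

lemma kdiff_kchain_eq_0_outside: "c \<in> kchain A n \<Longrightarrow> \<not> T \<subseteq> A \<Longrightarrow> kdiff scale y A c T = 0"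
  by (rule kdiff_eq_0_outside) (auto simp: kchain_def)

lemma kdiff_kchain:
  assumes "c \<in> kchain A (Suc n)"
  shows "kdiff scale y A c \<in> kchain A n"
  unfolding kchain_def
proof (intro CollectI allI impI)
  fix T assume "kdiff scale y A c T \<noteq> 0"
  then obtain l where l: "l \<in> A - T" "c (insert l T) \<noteq> 0"
    unfolding kdiff_def by (metis (no_types, lifting) scale_zero_right sum.neutral)
  hence "insert l T \<subseteq> A" "card (insert l T) = Suc n"
    using assms by (auto simp: kchain_def)
  moreover from this have "finite T"
    by (metis card.infinite finite_insert nat.distinct(1))
  ultimately show "T \<subseteq> A \<and> card T = n" using l by auto
qed

lemma kdiff_kchain_subset:
  assumes "finite A" "B \<subseteq> A" "c \<in> kchain B n"
  shows "kdiff scale y A c = kdiff scale y B c"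
proof
  fix T
  show "kdiff scale y A c T = kdiff scale y B c T"
    unfolding kdiff_def
  proof (rule sum.mono_neutral_right)
    show "\<forall>l\<in>A - T - (B - T). ((-1) ^ card {k\<in>T. k < l} * y l) *s c (insert l T) = 0"
      using assms(3) by (auto simp: kchain_def) (metis insertI1 scale_zero_right subsetD)
  qed (use assms in auto)
qed

lemma kbounds_zero: "(\<lambda>_. 0) \<in> kbounds scale y A n"
  unfolding kbounds_def by (rule image_eqI[OF _ kchain_zero]) (simp add: kdiff_def)

lemma kbounds_add:
  assumes "f \<in> kbounds scale y A n" "g \<in> kbounds scale y A n"
  shows "(\<lambda>S. f S + g S) \<in> kbounds scale y A n"
proof -
  obtain p q where "p \<in> kchain A (Suc n)" "q \<in> kchain A (Suc n)"
    "f = kdiff scale y A p" "g = kdiff scale y A q"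
    using assms by (auto simp: kbounds_def)
  thus ?thesis unfolding kbounds_def
    by (intro image_eqI[where x="\<lambda>S. p S + q S"]) (auto simp: kdiff_add kchain_add)
qed

lemma kbounds_diff:
  assumes "f \<in> kbounds scale y A n" "g \<in> kbounds scale y A n"
  shows "(\<lambda>S. f S - g S) \<in> kbounds scale y A n"
proof -
  obtain p q where "p \<in> kchain A (Suc n)" "q \<in> kchain A (Suc n)"
    "f = kdiff scale y A p" "g = kdiff scale y A q"
    using assms by (auto simp: kbounds_def)
  thus ?thesis unfolding kbounds_def
    by (intro image_eqI[where x="\<lambda>S. p S - q S"]) (auto simp: kdiff_diff kchain_diff)
qed

lemma kbounds_mono:
  assumes "finite A" "B \<subseteq> A" "b \<in> kbounds scale y B n"
  shows "b \<in> kbounds scale y A n"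
proof -
  obtain c where c: "c \<in> kchain B (Suc n)" "b = kdiff scale y B c"
    using assms(3) by (auto simp: kbounds_def)
  hence "b = kdiff scale y A c"
    using kdiff_kchain_subset[OF assms(1,2)] by simp
  with kchain_mono[OF c(1) assms(2)] show ?thesis
    unfolding kbounds_def by blast
qed

lemma kcycles_diff:
  "z \<in> kcycles scale y A n \<Longrightarrow> z' \<in> kcycles scale y A n
    \<Longrightarrow> (\<lambda>S. z S - z' S) \<in> kcycles scale y A n"
  by (simp add: kcycles_def kchain_diff kdiff_diff fun_eq_iff)

lemma kclass_eq_iff:
  "kclass scale y A n a = kclass scale y A n b \<longleftrightarrow> (\<lambda>S. a S - b S) \<in> kbounds scale y A n"
proof
  assume "kclass scale y A n a = kclass scale y A n b"
  moreover have "a \<in> kclass scale y A n a"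
    unfolding kclass_def using kbounds_zero by force
  ultimately obtain e where "e \<in> kbounds scale y A n" "a = (\<lambda>S. b S + e S)"
    unfolding kclass_def by auto
  thus "(\<lambda>S. a S - b S) \<in> kbounds scale y A n" by simp
next
  have sub: "kclass scale y A n p \<subseteq> kclass scale y A n q"
    if pq: "(\<lambda>S. p S - q S) \<in> kbounds scale y A n" for p q
  proof
    fix x assume "x \<in> kclass scale y A n p"
    then obtain e where e: "e \<in> kbounds scale y A n" "x = (\<lambda>S. p S + e S)"
      unfolding kclass_def by auto
    hence "x = (\<lambda>S. q S + ((p S - q S) + e S))" by (simp add: algebra_simps)
    with kbounds_add[OF pq e(1)] show "x \<in> kclass scale y A n q"
      unfolding kclass_def by (intro CollectI exI[of _ "\<lambda>S. p S - q S + e S"]) simp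
  qed
  assume ab: "(\<lambda>S. a S - b S) \<in> kbounds scale y A n"
  hence "(\<lambda>S. b S - a S) \<in> kbounds scale y A n"
    using kbounds_diff[OF kbounds_zero ab] by simp
  thus "kclass scale y A n a = kclass scale y A n b"
    using sub[OF ab] sub by blast
qed

lemma kpart_kchain:
  assumes "c \<in> kchain A (Suc n)"
  shows "kpart scale k A c \<in> kchain (A - {k}) n"
  unfolding kchain_def
proof (intro CollectI allI impI)
  fix T assume T: "kpart scale k A c T \<noteq> 0"
  hence TA: "T \<subseteq> A - {k}" and "c (insert k T) \<noteq> 0"
    by (auto simp: kpart_def split: if_splits)
  hence "card (insert k T) = Suc n"
    using assms by (auto simp: kchain_def)
  moreover have "finite T"
    using calculation by (metis card.infinite finite_insert nat.distinct(1))
  moreover have "k \<notin> T" using TA by blast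
  ultimately show "T \<subseteq> A - {k} \<and> card T = n" using TA by simp
qed

lemma kpart_diff: "kpart scale k A (\<lambda>S. f S - g S) = (\<lambda>T. kpart scale k A f T - kpart scale k A g T)"
  by (simp add: kpart_def scale_right_diff_distrib fun_eq_iff)

lemma kpart_kchain_subset:
  assumes "c \<in> kchain B n" "B \<subseteq> A"
  shows "kpart scale k A c = kpart scale k B c"
proof
  fix T
  show "kpart scale k A c T = kpart scale k B c T"
  proof (cases "T \<subseteq> B - {k}")
    case False
    hence "c (insert k T) = 0 \<or> \<not> T \<subseteq> A - {k}" using assms by (auto simp: kchain_def)
    thus ?thesis using False by (auto simp: kpart_def)
  qed (use assms in \<open>auto simp: kpart_def\<close>)
qed

text \<open>Both sign exponents grow by \<open>[k < l]\<close> when \<open>l\<close>, resp. \<open>k\<close>, is inserted, so the extra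
  signs cancel.\<close>
lemma kpart_kdiff:
  assumes "finite A" "k \<in> A"
  shows "kpart scale k A (kdiff scale y A c) = kdiff scale y (A - {k}) (kpart scale k A c)"
proof
  fix T
  show "kpart scale k A (kdiff scale y A c) T = kdiff scale y (A - {k}) (kpart scale k A c) T"
  proof (cases "T \<subseteq> A - {k}")
    case False
    thus ?thesis by (subst kdiff_eq_0_outside) (auto simp: kpart_def)
  next
    case True
    have fT: "finite T" using True assms finite_subset by blast
    have "kpart scale k A (kdiff scale y A c) T
       = (\<Sum>l\<in>A - {k} - T. ((-1) ^ card {m\<in>T. k < m} * ((-1) ^ card {m\<in>insert k T. m < l} * y l))
            *s c (insert l (insert k T)))"
      using True by (simp add: kpart_def kdiff_def Diff_insert2[symmetric] scale_sum_right)
    also have "\<dots> = (\<Sum>l\<in>A - {k} - T. ((-1) ^ card {m\<in>T. m < l} * y l) *s kpart scale k A c (insert l T))"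
    proof (rule sum.cong[OF refl])
      fix l assume l: "l \<in> A - {k} - T"
      have "card {m\<in>insert k T. m < l} = card {m\<in>T. m < l} + (if k < l then 1 else 0)"
        using True fT by (intro card_filter_insert) auto
      moreover have "card {m\<in>insert l T. k < m} = card {m\<in>T. k < m} + (if k < l then 1 else 0)"
        using l fT by (intro card_filter_insert) auto
      moreover have "insert l (insert k T) = insert k (insert l T)" by blast
      moreover have "insert l T \<subseteq> A - {k}" using l True by auto
      ultimately show "((-1) ^ card {m\<in>T. k < m} * ((-1) ^ card {m\<in>insert k T. m < l} * y l))
            *s c (insert l (insert k T)) = ((-1) ^ card {m\<in>T. m < l} * y l) *s kpart scale k A c (insert l T)"
        by (simp add: kpart_def power_add mult_ac)
    qed
    also have "\<dots> = kdiff scale y (A - {k}) (kpart scale k A c) T"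
      by (simp add: kdiff_def)
    finally show ?thesis .
  qed
qed

lemma kpart_kbounds:
  assumes "finite A" "k \<in> A" "b \<in> kbounds scale y A (Suc n)"
  shows "kpart scale k A b \<in> kbounds scale y (A - {k}) n"
proof -
  obtain c where "c \<in> kchain A (Suc (Suc n))" "b = kdiff scale y A c"
    using assms(3) by (auto simp: kbounds_def)
  thus ?thesis
    unfolding kbounds_def using kpart_kdiff[OF assms(1,2)] kpart_kchain by blast
qed

lemma kconn_kclass:
  assumes "finite A" "j \<in> A" "z \<in> kcycles scale y A (Suc n)"
  shows "kconn scale y A n j (kclass scale y A (Suc n) z)
    = kclass scale y (A - {j}) n (kpart scale j A z)"
proof -
  let ?P = "\<lambda>z'. z' \<in> kcycles scale y A (Suc n) \<and> kclass scale y A (Suc n) z' = kclass scale y A (Suc n) z"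
  have "?P (SOME z'. ?P z')"
    by (rule someI[of ?P z]) (simp add: assms(3))
  hence "(\<lambda>S. (SOME z'. ?P z') S - z S) \<in> kbounds scale y A (Suc n)"
    using kclass_eq_iff by blast
  from kpart_kbounds[OF assms(1,2) this] show ?thesis
    unfolding kconn_def kclass_eq_iff kpart_diff by simp
qed

lemma kdiff_insert_max:
  assumes "finite B" "\<forall>b\<in>B. b < j" "T \<subseteq> B"
  shows "kdiff scale y (insert j B) c T
    = kdiff scale y B c T + ((-1) ^ card T * y j) *s c (insert j T)"
proof -
  have "insert j B - T = insert j (B - T)" "j \<notin> B - T" "{k\<in>T. k < j} = T"
    using assms by auto
  thus ?thesis unfolding kdiff_def using assms(1) by (simp add: add.commute)
qed

lemma kdiff_insert_max_at_insert:
  assumes "\<forall>b\<in>B. b < j" "T \<subseteq> B"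
  shows "kdiff scale y (insert j B) c (insert j T) = kdiff scale y B (\<lambda>S. c (insert j S)) T"
proof -
  have "insert j B - insert j T = B - T" using assms by auto
  moreover have "{k\<in>insert j T. k < l} = {k\<in>T. k < l}" if "l \<in> B - T" for l
    using assms(1) that by auto
  ultimately show ?thesis
    unfolding kdiff_def by (auto intro!: sum.cong simp: insert_commute)
qed

lemma kpart_insert_max:
  assumes "\<forall>b\<in>B. b < j" "T \<subseteq> B"
  shows "kpart scale j (insert j B) c T = c (insert j T)"
proof -
  have "j \<notin> B" "\<forall>k\<in>T. k < j" using assms by auto
  hence "insert j B - {j} = B" and no_larger: "{k\<in>T. j < k} = {}" by auto
  thus ?thesis unfolding kpart_def no_larger using assms(2) by simp
qed

lemma kwedge_kchain:
  assumes "finite B" "j \<notin> B" "w \<in> kchain B n"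
  shows "kwedge j w \<in> kchain (insert j B) (Suc n)"
  unfolding kchain_def
proof (intro CollectI allI impI)
  fix S assume "kwedge j w S \<noteq> 0"
  hence jS: "j \<in> S" and "w (S - {j}) \<noteq> 0" by (auto simp: kwedge_def split: if_splits)
  hence "S - {j} \<subseteq> B" "card (S - {j}) = n" using assms(3) by (auto simp: kchain_def)
  moreover have "finite S" using calculation(1) assms(1) finite_subset by fastforce
  ultimately show "S \<subseteq> insert j B \<and> card S = Suc n"
    using jS card_Suc_Diff1[of S j] by auto
qed

lemma kdiff_kwedge_at_insert:
  assumes "\<forall>b\<in>B. b < j" "T \<subseteq> B"
  shows "kdiff scale y (insert j B) (kwedge j w) (insert j T) = kdiff scale y B w T"
proof -
  have "kwedge j w (insert j S) = w S" if "S \<subseteq> B" for S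
  proof -
    have "j \<notin> S" using assms(1) that by auto
    thus ?thesis by (simp add: kwedge_def)
  qed
  thus ?thesis
    unfolding kdiff_insert_max_at_insert[OF assms] by (intro kdiff_cong assms(2))
qed

lemma kdiff_kwedge_below:
  assumes "finite B" "\<forall>b\<in>B. b < j" "T \<subseteq> B"
  shows "kdiff scale y (insert j B) (kwedge j w) T = ((-1) ^ card T * y j) *s w T"
proof -
  have "kdiff scale y B (kwedge j w) T = kdiff scale y B (\<lambda>_. 0) T"
    using assms(2) by (intro kdiff_cong assms(3)) (auto simp: kwedge_def)
  moreover have "j \<notin> T" using assms(2,3) by auto
  hence "kwedge j w (insert j T) = w T" by (simp add: kwedge_def)
  ultimately show ?thesis
    unfolding kdiff_insert_max[OF assms] by (simp add: kdiff_def)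
qed

lemma kpart_kchain_notin:
  assumes "x \<in> kchain B n" "j \<notin> B"
  shows "kpart scale j A x = (\<lambda>_. 0)"
proof -
  have "x (insert j T) = 0" for T using assms unfolding kchain_def by blast
  thus ?thesis by (simp add: kpart_def fun_eq_iff)
qed

text \<open>Write a preimage as \<open>v = v\<^sub>0 + v\<^sub>1 \<and> e\<^sub>j\<close>. Since \<open>x\<close> lives on \<open>B\<close>, \<open>v\<^sub>1\<close> is a cycle on
  \<open>B\<close>, so \<open>y\<^sub>j v\<^sub>1 = d q\<close>, and then \<open>x = d v\<^sub>0 \<plusminus> y\<^sub>j v\<^sub>1 = d (v\<^sub>0 \<plusminus> q)\<close>.\<close>
lemma kbounds_of_kbounds_insert_max:
  assumes "finite B" "\<forall>b\<in>B. b < j"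
    and annihilated: "\<forall>v\<in>kcycles scale y B n. (\<lambda>S. y j *s v S) \<in> kbounds scale y B n"
    and x: "x \<in> kchain B n" "x \<in> kbounds scale y (insert j B) n"
  shows "x \<in> kbounds scale y B n"
proof -
  have jB: "j \<notin> B" and AB: "insert j B - {j} = B" using assms(2) by auto
  obtain v where v: "v \<in> kchain (insert j B) (Suc n)" "x = kdiff scale y (insert j B) v"
    using x(2) by (auto simp: kbounds_def)
  have "kpart scale j (insert j B) v \<in> kchain B n"
    using kpart_kchain[OF v(1), of j] unfolding AB .
  moreover have "kdiff scale y B (kpart scale j (insert j B) v) = (\<lambda>_. 0)"
    using kpart_kdiff[where A="insert j B" and k=j and c=v and y=y] assms(1)
    unfolding AB v(2)[symmetric] kpart_kchain_notin[OF x(1) jB] by simp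
  ultimately have "kpart scale j (insert j B) v \<in> kcycles scale y B n"
    by (simp add: kcycles_def)
  with annihilated obtain q where q: "q \<in> kchain B (Suc n)"
    "(\<lambda>S. y j *s kpart scale j (insert j B) v S) = kdiff scale y B q"
    by (auto simp: kbounds_def)
  define p where "p = (\<lambda>S. (if S \<subseteq> B then v S else 0) + (-1) ^ n *s q S)"
  have pc: "p \<in> kchain B (Suc n)"
    unfolding p_def by (intro kchain_add kchain_scale kchain_restrict[OF v(1)] q(1))
  have "x T = kdiff scale y B p T" for T
  proof (cases "T \<subseteq> B")
    case True
    have "finite T" "j \<notin> T" using True assms(1) jB finite_subset by auto
    have "kdiff scale y B p T
        = kdiff scale y B (\<lambda>S. if S \<subseteq> B then v S else 0) T + (-1) ^ n *s kdiff scale y B q T"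
      unfolding p_def kdiff_add kdiff_scale ..
    also have "kdiff scale y B (\<lambda>S. if S \<subseteq> B then v S else 0) T = kdiff scale y B v T"
      by (rule kdiff_cong[OF _ True]) simp
    also have "kdiff scale y B q T = y j *s v (insert j T)"
      using fun_cong[OF q(2), of T] kpart_insert_max[OF assms(2) True] by simp
    also have "(-1) ^ n *s y j *s v (insert j T) = ((-1) ^ card T * y j) *s v (insert j T)"
      using kchain_sign_insert[OF v(1) \<open>finite T\<close> \<open>j \<notin> T\<close>] by simp
    also have "kdiff scale y B v T + \<dots> = x T"
      using kdiff_insert_max[OF assms(1,2) True] v(2) by simp
    finally show ?thesis ..
  next
    case False
    hence "x T = 0" using x(1) unfolding kchain_def by blast
    thus ?thesis using kdiff_kchain_eq_0_outside[OF pc False] by simp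
  qed
  thus ?thesis using pc unfolding kbounds_def by auto
qed

lemma kpart_kbounds_of_kbounds_insert_max:
  assumes "finite B" "\<forall>b\<in>B. b < j" "k \<in> B"
    and annihilated: "\<forall>v\<in>kcycles scale y (B - {k}) n. (\<lambda>S. y j *s v S) \<in> kbounds scale y (B - {k}) n"
    and c: "c \<in> kchain B (Suc n)"
    and bounds: "kpart scale k (insert j B) c \<in> kbounds scale y (insert j B - {k}) n"
  shows "kpart scale k B c \<in> kbounds scale y (B - {k}) n"
proof (rule kbounds_of_kbounds_insert_max[OF _ _ annihilated kpart_kchain[OF c]])
  have "insert j B - {k} = insert j (B - {k})" using assms(2,3) by auto
  with bounds kpart_kchain_subset[OF c subset_insertI]
  show "kpart scale k B c \<in> kbounds scale y (insert j (B - {k})) n" by simp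
qed (use assms(1,2) in auto)

text \<open>The \<open>e\<^sub>j\<close>-component of \<open>d (w \<and> e\<^sub>j)\<close> is \<open>d w\<close>, which cancels that of \<open>z\<close>.\<close>
lemma kcycles_diff_kdiff_kwedge:
  assumes "finite B" "\<forall>b\<in>B. b < j"
    and z: "z \<in> kcycles scale y (insert j B) (Suc n)"
    and w: "w \<in> kchain B (Suc n)" "kpart scale j (insert j B) z = kdiff scale y B w"
  shows "(\<lambda>S. z S - kdiff scale y (insert j B) (kwedge j w) S) \<in> kcycles scale y B (Suc n)"
    (is "?z' \<in> _")
proof -
  let ?u = "kdiff scale y (insert j B) (kwedge j w)"
  have jB: "j \<notin> B" using assms(2) by auto
  have zc: "z \<in> kchain (insert j B) (Suc n)" and zd: "kdiff scale y (insert j B) z = (\<lambda>_. 0)"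
    using z by (auto simp: kcycles_def)
  have uc: "?u \<in> kchain (insert j B) (Suc n)"
    by (intro kdiff_kchain kwedge_kchain assms(1) jB w(1))
  have u_at_insert: "?u (insert j T) = z (insert j T)" if "T \<subseteq> B" for T
    using kdiff_kwedge_at_insert[OF assms(2) that] fun_cong[OF w(2), of T]
      kpart_insert_max[OF assms(2) that] by simp
  have z'c: "?z' \<in> kchain B (Suc n)"
    unfolding kchain_def
  proof (intro CollectI allI impI)
    fix S assume S: "z S - ?u S \<noteq> 0"
    hence "S \<subseteq> insert j B" "card S = Suc n"
      using kchain_diff[OF zc uc] unfolding kchain_def by blast+
    moreover have "j \<notin> S"
    proof
      assume "j \<in> S"
      hence "S = insert j (S - {j})" by blast
      with u_at_insert[of "S - {j}"] S \<open>S \<subseteq> insert j B\<close> show False by auto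
    qed
    ultimately show "S \<subseteq> B \<and> card S = Suc n" by blast
  qed
  have "kdiff scale y B ?z' T = 0" for T
  proof (cases "T \<subseteq> B")
    case True
    have "finite T" "j \<notin> T" using True assms(1) jB finite_subset by auto
    have "kdiff scale y B ?u T = kdiff scale y B (\<lambda>S. ((-1) ^ Suc n * y j) *s w S) T"
      using kdiff_kwedge_below[OF assms(1,2)] kchain_sign[OF w(1)] by (intro kdiff_cong True) simp
    also have "\<dots> = ((-1) ^ Suc n * y j) *s z (insert j T)"
      unfolding kdiff_scale using fun_cong[OF w(2), of T] kpart_insert_max[OF assms(2) True] by simp
    also have "\<dots> = - (((-1) ^ card T * y j) *s z (insert j T))"
      using kchain_sign_insert[OF zc \<open>finite T\<close> \<open>j \<notin> T\<close>, of "- y j"] by simp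
    also have "\<dots> = kdiff scale y B z T"
      using kdiff_insert_max[OF assms(1,2) True, where c=z and y=y] zd
      by (simp add: neg_eq_iff_add_eq_0 add.commute)
    finally show ?thesis by (simp add: kdiff_diff)
  qed (rule kdiff_kchain_eq_0_outside[OF z'c])
  with z'c show ?thesis by (simp add: kcycles_def fun_eq_iff)
qed

lemma kbounds_if_kpart_kbounds:
  assumes "finite A" "khom_annihilated_above scale y A n"
    and "z \<in> kcycles scale y A (Suc n)"
    and "\<forall>k\<in>A. kpart scale k A z \<in> kbounds scale y (A - {k}) n"
  shows "z \<in> kbounds scale y A (Suc n)"
  using assms
proof (induction A arbitrary: z rule: finite_linorder_max_induct)
  case empty
  hence "z \<in> kchain {} (Suc n)" by (simp add: kcycles_def)
  hence "z = (\<lambda>_. 0)" by (rule kchain_empty_Suc)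
  thus ?case by (simp add: kbounds_zero)
next
  case (insert j B)
  let ?A = "insert j B"
  note annihilated = insert.prems(1)
  have AB: "?A - {j} = B" using insert.hyps(2) by auto
  obtain w where w: "w \<in> kchain B (Suc n)" "kpart scale j ?A z = kdiff scale y B w"
    using insert.prems(3) AB by (auto simp: kbounds_def)
  define u where "u = kdiff scale y ?A (kwedge j w)"
  have u: "u \<in> kbounds scale y ?A (Suc n)"
    unfolding u_def kbounds_def using insert.hyps w(1) by (auto intro: kwedge_kchain)
  define z' where "z' = (\<lambda>S. z S - u S)"
  have z': "z' \<in> kcycles scale y B (Suc n)"
    unfolding z'_def u_def using insert.hyps insert.prems(2) w by (rule kcycles_diff_kdiff_kwedge)
  have "kpart scale k B z' \<in> kbounds scale y (B - {k}) n" if k: "k \<in> B" for k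
  proof (rule kpart_kbounds_of_kbounds_insert_max[OF insert.hyps k])
    show "\<forall>v\<in>kcycles scale y (B - {k}) n. (\<lambda>S. y j *s v S) \<in> kbounds scale y (B - {k}) n"
      using annihilated[unfolded khom_annihilated_above_def, rule_format, of "B - {k}" j]
        insert.hyps(2) by blast
    show "z' \<in> kchain B (Suc n)" using z' by (simp add: kcycles_def)
    have "kpart scale k ?A u \<in> kbounds scale y (?A - {k}) n"
      using insert.hyps(1) k by (intro kpart_kbounds u) auto
    with insert.prems(3) k show "kpart scale k ?A z' \<in> kbounds scale y (?A - {k}) n"
      unfolding z'_def kpart_diff by (intro kbounds_diff) auto
  qed
  moreover have "khom_annihilated_above scale y B n"
    using annihilated by (rule khom_annihilated_above_subset) auto
  ultimately have "z' \<in> kbounds scale y B (Suc n)"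
    using insert.IH z' by blast
  with insert.hyps(1) have "z' \<in> kbounds scale y ?A (Suc n)"
    using kbounds_mono[OF _ subset_insertI] by blast
  from kbounds_add[OF this u] show ?case unfolding z'_def by simp
qed

lemma inj_on_kbd:
  assumes "finite A" "khom_annihilated_above scale y A n"
  shows "inj_on (kbd scale y A n) (khom scale y A (Suc n))"
proof (rule inj_onI)
  fix h h' assume "h \<in> khom scale y A (Suc n)" "h' \<in> khom scale y A (Suc n)"
    and eq: "kbd scale y A n h = kbd scale y A n h'"
  then obtain z z' where z: "z \<in> kcycles scale y A (Suc n)" "h = kclass scale y A (Suc n) z"
    and z': "z' \<in> kcycles scale y A (Suc n)" "h' = kclass scale y A (Suc n) z'"
    by (auto simp: khom_def)
  have "kpart scale k A (\<lambda>S. z S - z' S) \<in> kbounds scale y (A - {k}) n" if k: "k \<in> A" for k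
  proof -
    have "kconn scale y A n k h = kconn scale y A n k h'"
      using fun_cong[OF eq, of k] k by (simp add: kbd_def)
    thus ?thesis
      using kconn_kclass[OF assms(1) k z(1)] kconn_kclass[OF assms(1) k z'(1)] z(2) z'(2)
      by (simp add: kclass_eq_iff kpart_diff)
  qed
  hence "(\<lambda>S. z S - z' S) \<in> kbounds scale y A (Suc n)"
    using kbounds_if_kpart_kbounds[OF assms kcycles_diff[OF z(1) z'(1)]] by blast
  thus "h = h'" using z(2) z'(2) by (simp add: kclass_eq_iff)
qed

end

theorem lemma2p1:
  fixes scale :: "'a::comm_ring_1 \<Rightarrow> 'b::ab_group_add \<Rightarrow> 'b"
    and y :: "nat \<Rightarrow> 'a" and r i :: nat
  assumes "module scale"
    and "0 < i"
    and "\<forall>A s. A \<subseteq> {1..r} \<and> (\<forall>a\<in>A. a < s) \<and> 1 \<le> s \<and> s \<le> r \<longrightarrow>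
           (\<forall>z \<in> kcycles scale y A i.
              kclass scale y A i (\<lambda>S. scale (y s) (z S)) = kclass scale y A i (\<lambda>_. 0))"
  shows "\<forall>A. A \<subseteq> {1..r} \<longrightarrow> inj_on (kbd scale y A i) (khom scale y A (Suc i))"
proof (intro allI impI)
  interpret module scale by fact
  fix A assume A: "A \<subseteq> {1..r}"
  have "finite A" using A finite_subset by blast
  moreover have "khom_annihilated_above scale y A i"
    unfolding khom_annihilated_above_def
  proof (intro allI impI ballI)
    fix B s v assume "B \<subseteq> A" "s \<in> A" "\<forall>b\<in>B. b < s" "v \<in> kcycles scale y B i"
    with A assms(3) have "kclass scale y B i (\<lambda>S. scale (y s) (v S)) = kclass scale y B i (\<lambda>_. 0)"
      by (meson atLeastAtMost_iff subsetD order.trans)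
    thus "(\<lambda>S. scale (y s) (v S)) \<in> kbounds scale y B i" by (simp add: kclass_eq_iff)
  qed
  ultimately show "inj_on (kbd scale y A i) (khom scale y A (Suc i))" by (rule inj_on_kbd)
qed

end
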